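(* For every scoring function $S$ and every integer $n\ge2$, $$\lambda_n(S)\le\lambda(S)\le\lambda_n(S)+c_n\|S\|_\delta\frac{\sqrt{\ln n}}{\sqrt n}+\frac{2\|S\|_\infty}{n},\qquad c_n=\sqrt{\frac{2\ln3+2\ln(n+2)}{\ln n}}.$$
   Context: Let $\mathcal{A}$ be a finite alphabet and $\mathcal{A}^*=\mathcal{A}\cup\{G\}$, where $G$ is a gap symbol. A scoring function is a symmetric map $S:\mathcal{A}^*\times\mathcal{A}^*\to\mathbb{R}$; $\|S\|_\delta=\max_{c,d,e\in\mathcal{A}^*}|S(c,d)-S(c,e)|$ and $\|S\|_\infty=\max_{c,d\in\mathcal{A}^*}|S(c,d)|$. For strings $x=x_1\dots x_m$, $y=y_1\dots y_{m'}$ over $\mathcal{A}$, an alignment $\pi$ is a sequence $((\mu_1,\nu_1),\dots,(\mu_k,\nu_k))$, $k\ge0$, with $1\le\mu_1<\dots<\mu_k\le m$ and $1\le\nu_1<\dots<\nu_k\le m'$; its score is $S_\pi(x,y)=\sum_{i=1}^k S(x_{\mu_i},y_{\nu_i})+\sum_{j\notin\{\mu_i\}}S(x_j,G)+\sum_{j\notin\{\nu_i\}}S(G,y_j)$, and $L_S(x,y)=\max_\pi S_\pi(x,y)$. Let $X_1,X_2,\dots,Y_1,Y_2,\dots$ be i.i.d. letters in $\mathcal{A}$. Put $L_n(S)=L_S(X_1\dots X_n,Y_1\dots Y_n)$, $\lambda_n(S)=E[L_n(S)]/n$ and $\lambda(S)=\lim_{n\to\infty}\lambda_n(S)$ (which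 exists). *)

theory Defs
  imports "HOL-Probability.Probability"
begin

text \<open>Extended alphabet with gap symbol G: 'a option, where
  None plays the role of the gap symbol G.
  Strings are lists; positions are 0-based internally.\<close>

definition delta_norm :: "('a::finite option \<Rightarrow> 'a option \<Rightarrow> real) \<Rightarrow> real" where
  "delta_norm S = Max {\<bar>S c d - S c e\<bar> | c d e. True}"

definition sup_norm :: "('a::finite option \<Rightarrow> 'a option \<Rightarrow> real) \<Rightarrow> real" where
  "sup_norm S = Max {\<bar>S c d\<bar> | c d. True}"

definition alignments :: "nat \<Rightarrow> nat \<Rightarrow> (nat \<times> nat) list set" where
  "alignments m m' = {\<pi>. sorted_wrt (\<lambda>(a, b) (c, d). a < c \<and> b < d) \<pi> \<and>
                         (\<forall>(a, b) \<in> set \<pi>. a < m \<and> b < m')}"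

definition align_score ::
  "('a option \<Rightarrow> 'a option \<Rightarrow> real) \<Rightarrow> (nat \<times> nat) list \<Rightarrow> 'a list \<Rightarrow> 'a list \<Rightarrow> real" where
  "align_score S \<pi> x y =
     (\<Sum>(i, j) \<leftarrow> \<pi>. S (Some (x ! i)) (Some (y ! j)))
     + (\<Sum>j \<in> {..<length x} - fst ` set \<pi>. S (Some (x ! j)) None)
     + (\<Sum>j \<in> {..<length y} - snd ` set \<pi>. S None (Some (y ! j)))"

definition opt_score :: "('a option \<Rightarrow> 'a option \<Rightarrow> real) \<Rightarrow> 'a list \<Rightarrow> 'a list \<Rightarrow> real" where
  "opt_score S x y = Max ((\<lambda>\<pi>. align_score S \<pi> x y) ` alignments (length x) (length y))"

definition lambda_n :: "'a pmf \<Rightarrow> ('a option \<Rightarrow> 'a option \<Rightarrow> real) \<Rightarrow> nat \<Rightarrow> real" where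
  "lambda_n p S n =
     measure_pmf.expectation (pair_pmf (replicate_pmf n p) (replicate_pmf n p))
       (\<lambda>(x, y). opt_score S x y) / real n"

definition lambda_lim :: "'a pmf \<Rightarrow> ('a option \<Rightarrow> 'a option \<Rightarrow> real) \<Rightarrow> real" where
  "lambda_lim p S = lim (\<lambda>n. lambda_n p S n)"

end

theory Submission
  imports Defs
begin

text \<open>By superadditivity of \<open>N \<mapsto> E L\<^sub>N\<close>, Fekete's lemma identifies \<open>\<lambda>\<close> with
  \<open>sup\<^sub>N \<lambda>\<^sub>N\<close>, which gives the lower bound. For the upper bound fix \<open>n\<close> and \<open>s > 0\<close>
  and study \<open>M(P, Q) = E exp (s L)\<close> for random strings of lengths \<open>P\<close> and \<open>Q\<close>. An optimal
  alignment either matches a pair \<open>(a, b)\<close> with \<open>a + b + 1 = n\<close> or can be cut at some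
  \<open>(i, j)\<close> with \<open>i + j = n\<close>; by independence of the two pieces,
  \<open>M(P, Q)\<close> is at most a sum of at most \<open>2 n + 1\<close> products
  \<open>M(first block) * M(rest)\<close>. McDiarmid's inequality bounds the first factor by
  \<open>exp ((n + 1) (s \<lambda>\<^sub>n / 2 + s\<^sup>2 \<parallel>S\<parallel>\<^sub>\<delta>\<^sup>2 / 8))\<close>, so \<open>M(N, N)\<close> grows at most like
  \<open>(2 n + 1)\<^bsup>2 N / n\<^esup>\<close> times that rate. Jensen's inequality, \<open>N \<rightarrow> \<infinity>\<close> and the optimal
  choice of \<open>s\<close> give \<open>\<lambda> \<le> \<lambda>\<^sub>n + \<parallel>S\<parallel>\<^sub>\<delta> sqrt (2 ln (2 n + 1) / n)\<close>, which is below the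
  claimed bound.\<close>

section \<open>Alignments\<close>

definition align_before :: "nat \<times> nat \<Rightarrow> nat \<times> nat \<Rightarrow> bool" where
  "align_before = (\<lambda>(a, b) (c, d). a < c \<and> b < d)"

lemma alignments_iff:
  "\<pi> \<in> alignments m m' \<longleftrightarrow> sorted_wrt align_before \<pi> \<and> (\<forall>(a, b) \<in> set \<pi>. a < m \<and> b < m')"
  by (simp add: alignments_def align_before_def)

lemma sorted_align_before_distinct: "sorted_wrt align_before \<pi> \<Longrightarrow> distinct \<pi>"
  by (induction \<pi>) (auto simp: align_before_def)

lemma sorted_align_before_comparable:
  "sorted_wrt align_before \<pi> \<Longrightarrow> u \<in> set \<pi> \<Longrightarrow> v \<in> set \<pi> \<Longrightarrow>
    u = v \<or> align_before u v \<or> align_before v u"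
  by (induction \<pi>) auto

lemma finite_alignments: "finite (alignments m m')"
proof -
  have "alignments m m' \<subseteq> {xs. set xs \<subseteq> {..<m} \<times> {..<m'} \<and> length xs \<le> m * m'}"
  proof
    fix \<pi> assume \<pi>: "\<pi> \<in> alignments m m'"
    then have set: "set \<pi> \<subseteq> {..<m} \<times> {..<m'}"
      by (auto simp: alignments_iff)
    have "length \<pi> = card (set \<pi>)"
      using \<pi> by (simp add: alignments_iff distinct_card sorted_align_before_distinct)
    also have "\<dots> \<le> card ({..<m} \<times> {..<m'})"
      using set by (intro card_mono) auto
    finally show "\<pi> \<in> {xs. set xs \<subseteq> {..<m} \<times> {..<m'} \<and> length xs \<le> m * m'}"
      using set by (simp add: card_cartesian_product)
  qed
  moreover have "finite {xs. set xs \<subseteq> {..<m} \<times> {..<m'} \<and> length xs \<le> m * m'}"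
    by (rule finite_lists_length_le) auto
  ultimately show ?thesis
    by (rule finite_subset)
qed

lemma Nil_in_alignments: "[] \<in> alignments m m'"
  by (simp add: alignments_def)

lemma align_score_le_opt_score:
  "\<pi> \<in> alignments (length x) (length y) \<Longrightarrow> align_score S \<pi> x y \<le> opt_score S x y"
  unfolding opt_score_def by (rule Max_ge) (auto intro: finite_alignments)

lemma opt_score_attained:
  obtains \<pi> where "\<pi> \<in> alignments (length x) (length y)" "opt_score S x y = align_score S \<pi> x y"
proof -
  have "opt_score S x y \<in> (\<lambda>\<pi>. align_score S \<pi> x y) ` alignments (length x) (length y)"
    unfolding opt_score_def by (rule Max_in) (auto intro: finite_alignments Nil_in_alignments)
  then show ?thesis
    using that by auto
qed

lemma opt_score_Nil: "opt_score S [] [] = 0"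
proof -
  have "alignments 0 0 = {[]}"
  proof (intro set_eqI iffI)
    fix \<pi> assume "\<pi> \<in> alignments 0 0"
    then show "\<pi> \<in> {[]}"
      by (cases \<pi>) (auto simp: alignments_def)
  qed (simp add: alignments_def)
  then show ?thesis
    by (simp add: opt_score_def align_score_def)
qed

lemma opt_score_singleton_ge: "S (Some c) (Some d) \<le> opt_score S [c] [d]"
proof -
  have "[(0, 0)] \<in> alignments (length [c]) (length [d])"
    by (simp add: alignments_def)
  moreover have "align_score S [(0, 0)] [c] [d] = S (Some c) (Some d)"
    by (simp add: align_score_def lessThan_Suc)
  ultimately show ?thesis
    by (metis align_score_le_opt_score)
qed

definition shift_alignment :: "nat \<Rightarrow> nat \<Rightarrow> (nat \<times> nat) list \<Rightarrow> (nat \<times> nat) list" where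
  "shift_alignment i j \<pi> = map (\<lambda>(a, b). (a + i, b + j)) \<pi>"

lemma sum_unmatched_append:
  fixes g :: "'a \<Rightarrow> 'b::comm_monoid_add"
  assumes "F1 \<subseteq> {..<length x1}" "F2 \<subseteq> {..<length x2}"
  shows "(\<Sum>j\<in>{..<length x1 + length x2} - (F1 \<union> (\<lambda>a. a + length x1) ` F2). g ((x1 @ x2) ! j))
       = (\<Sum>j\<in>{..<length x1} - F1. g (x1 ! j)) + (\<Sum>j\<in>{..<length x2} - F2. g (x2 ! j))"
proof -
  let ?m = "length x1"
  have split: "{..<length x1 + length x2} - (F1 \<union> (\<lambda>a. a + ?m) ` F2)
      = ({..<?m} - F1) \<union> (\<lambda>a. a + ?m) ` ({..<length x2} - F2)"
  proof (intro set_eqI iffI)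
    fix j assume j: "j \<in> {..<length x1 + length x2} - (F1 \<union> (\<lambda>a. a + ?m) ` F2)"
    show "j \<in> ({..<?m} - F1) \<union> (\<lambda>a. a + ?m) ` ({..<length x2} - F2)"
    proof (cases "j < ?m")
      case False
      then have "j = (j - ?m) + ?m" "j - ?m \<in> {..<length x2} - F2"
        using j by (auto simp: image_iff)
      then show ?thesis by blast
    qed (use j in auto)
  qed (use assms in auto)
  have "(\<Sum>j\<in>{..<length x1 + length x2} - (F1 \<union> (\<lambda>a. a + ?m) ` F2). g ((x1 @ x2) ! j))
      = (\<Sum>j\<in>{..<?m} - F1. g ((x1 @ x2) ! j)) + (\<Sum>j\<in>{..<length x2} - F2. g ((x1 @ x2) ! (j + ?m)))"
    unfolding split by (subst sum.union_disjoint) (auto simp: sum.reindex)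
  also have "\<dots> = (\<Sum>j\<in>{..<length x1} - F1. g (x1 ! j)) + (\<Sum>j\<in>{..<length x2} - F2. g (x2 ! j))"
    by (intro arg_cong2[where f = "(+)"] sum.cong) (auto simp: nth_append)
  finally show ?thesis .
qed

lemma append_shift_alignment:
  assumes \<pi>1: "\<pi>1 \<in> alignments (length x1) (length y1)"
    and \<pi>2: "\<pi>2 \<in> alignments (length x2) (length y2)"
  defines "\<pi> \<equiv> \<pi>1 @ shift_alignment (length x1) (length y1) \<pi>2"
  shows "\<pi> \<in> alignments (length (x1 @ x2)) (length (y1 @ y2))"
    and "align_score S \<pi> (x1 @ x2) (y1 @ y2) = align_score S \<pi>1 x1 y1 + align_score S \<pi>2 x2 y2"
proof -
  let ?m = "length x1" and ?m' = "length y1"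
  show "\<pi> \<in> alignments (length (x1 @ x2)) (length (y1 @ y2))"
    using \<pi>1 \<pi>2 unfolding \<pi>_def alignments_iff shift_alignment_def
    by (auto simp: sorted_wrt_append sorted_wrt_map align_before_def
        elim!: sorted_wrt_mono_rel[rotated])
  have matched: "(\<Sum>(i, j) \<leftarrow> \<pi>. S (Some ((x1 @ x2) ! i)) (Some ((y1 @ y2) ! j)))
     = (\<Sum>(i, j) \<leftarrow> \<pi>1. S (Some (x1 ! i)) (Some (y1 ! j)))
       + (\<Sum>(i, j) \<leftarrow> \<pi>2. S (Some (x2 ! i)) (Some (y2 ! j)))"
  proof -
    have "map (\<lambda>(i, j). S (Some ((x1 @ x2) ! i)) (Some ((y1 @ y2) ! j))) \<pi>1
        = map (\<lambda>(i, j). S (Some (x1 ! i)) (Some (y1 ! j))) \<pi>1"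
      using \<pi>1 by (auto simp: alignments_iff nth_append intro!: map_cong)
    moreover have "map (\<lambda>(i, j). S (Some ((x1 @ x2) ! i)) (Some ((y1 @ y2) ! j))) (shift_alignment ?m ?m' \<pi>2)
        = map (\<lambda>(i, j). S (Some (x2 ! i)) (Some (y2 ! j))) \<pi>2"
      by (auto simp: shift_alignment_def nth_append intro!: map_cong)
    ultimately show ?thesis
      by (simp only: \<pi>_def map_append sum_list_append)
  qed
  have "fst ` set \<pi> = fst ` set \<pi>1 \<union> (\<lambda>a. a + ?m) ` fst ` set \<pi>2"
    and "snd ` set \<pi> = snd ` set \<pi>1 \<union> (\<lambda>a. a + ?m') ` snd ` set \<pi>2"
    by (force simp: \<pi>_def shift_alignment_def image_iff)+
  moreover have "fst ` set \<pi>1 \<subseteq> {..<length x1}" "fst ` set \<pi>2 \<subseteq> {..<length x2}"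
    and "snd ` set \<pi>1 \<subseteq> {..<length y1}" "snd ` set \<pi>2 \<subseteq> {..<length y2}"
    using \<pi>1 \<pi>2 by (auto simp: alignments_iff)
  ultimately show "align_score S \<pi> (x1 @ x2) (y1 @ y2) = align_score S \<pi>1 x1 y1 + align_score S \<pi>2 x2 y2"
    unfolding align_score_def matched
    by (simp add: sum_unmatched_append[where g = "\<lambda>c. S (Some c) None"]
        sum_unmatched_append[where g = "\<lambda>c. S None (Some c)"])
qed

lemma opt_score_append_superadditive:
  "opt_score S x1 y1 + opt_score S x2 y2 \<le> opt_score S (x1 @ x2) (y1 @ y2)"
proof -
  obtain \<pi>1 where \<pi>1: "\<pi>1 \<in> alignments (length x1) (length y1)" "opt_score S x1 y1 = align_score S \<pi>1 x1 y1"
    by (rule opt_score_attained)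
  obtain \<pi>2 where \<pi>2: "\<pi>2 \<in> alignments (length x2) (length y2)" "opt_score S x2 y2 = align_score S \<pi>2 x2 y2"
    by (rule opt_score_attained)
  show ?thesis
    using align_score_le_opt_score[OF append_shift_alignment(1)[OF \<pi>1(1) \<pi>2(1)], of S]
      append_shift_alignment(2)[OF \<pi>1(1) \<pi>2(1), of S] \<pi>1(2) \<pi>2(2)
    by simp
qed

lemma sorted_align_before_filter_append:
  "sorted_wrt align_before \<pi> \<Longrightarrow> filter (\<lambda>u. fst u < i) \<pi> @ filter (\<lambda>u. \<not> fst u < i) \<pi> = \<pi>"
proof (induction \<pi>)
  case (Cons u \<pi>)
  show ?case
  proof (cases "fst u < i")
    case False
    then have "\<forall>v\<in>set \<pi>. \<not> fst v < i"
      using Cons.prems by (auto simp: align_before_def)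
    then show ?thesis
      using False by simp
  qed (use Cons in simp)
qed simp

lemma alignment_split:
  assumes \<pi>: "\<pi> \<in> alignments (length x) (length y)" and "i \<le> length x" "j \<le> length y"
    and cut: "\<forall>(a, b) \<in> set \<pi>. (a < i \<and> b < j) \<or> (i \<le> a \<and> j \<le> b)"
  obtains \<pi>1 \<pi>2 where "\<pi>1 \<in> alignments i j" "\<pi>2 \<in> alignments (length x - i) (length y - j)"
    "align_score S \<pi> x y = align_score S \<pi>1 (take i x) (take j y) + align_score S \<pi>2 (drop i x) (drop j y)"
    "set \<pi>1 = {u \<in> set \<pi>. fst u < i}"
    "set \<pi>2 = (\<lambda>(a, b). (a - i, b - j)) ` {u \<in> set \<pi>. \<not> fst u < i}"
proof -
  define \<pi>1 where "\<pi>1 = filter (\<lambda>u. fst u < i) \<pi>"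
  define \<pi>2 where "\<pi>2 = map (\<lambda>(a, b). (a - i, b - j)) (filter (\<lambda>u. \<not> fst u < i) \<pi>)"
  have sorted: "sorted_wrt align_before \<pi>"
    using \<pi> by (simp add: alignments_iff)
  have ge: "i \<le> a \<and> j \<le> b" if "(a, b) \<in> set \<pi>" "\<not> a < i" for a b
    using cut that by fastforce
  have \<pi>1_in: "\<pi>1 \<in> alignments (length (take i x)) (length (take j y))"
    using \<pi> cut assms(2,3) unfolding \<pi>1_def alignments_iff
    by (auto simp: sorted_wrt_filter min_def)
  have "sorted_wrt align_before \<pi>2"
    unfolding \<pi>2_def
  proof (rule sorted_wrt_map_mono[OF sorted_wrt_filter[OF sorted]])
    fix u v assume "u \<in> set (filter (\<lambda>u. \<not> fst u < i) \<pi>)" "v \<in> set (filter (\<lambda>u. \<not> fst u < i) \<pi>)"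
      and "align_before u v"
    then show "align_before ((\<lambda>(a, b). (a - i, b - j)) u) ((\<lambda>(a, b). (a - i, b - j)) v)"
      using ge[of "fst u" "snd u"] ge[of "fst v" "snd v"]
      by (auto simp: align_before_def split: prod.splits)
  qed
  moreover have "\<forall>(a, b) \<in> set \<pi>2. a < length (drop i x) \<and> b < length (drop j y)"
    using \<pi> ge by (fastforce simp: \<pi>2_def alignments_iff)
  ultimately have \<pi>2_in: "\<pi>2 \<in> alignments (length (drop i x)) (length (drop j y))"
    by (simp add: alignments_iff)
  have "shift_alignment i j \<pi>2 = filter (\<lambda>u. \<not> fst u < i) \<pi>"
    unfolding \<pi>2_def shift_alignment_def map_map using cut
    by (intro map_idI) auto
  then have "\<pi>1 @ shift_alignment (length (take i x)) (length (take j y)) \<pi>2 = \<pi>"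
    using assms(2,3) sorted_align_before_filter_append[OF sorted, of i] by (simp add: \<pi>1_def min_def)
  then have "align_score S \<pi> x y = align_score S \<pi>1 (take i x) (take j y) + align_score S \<pi>2 (drop i x) (drop j y)"
    using append_shift_alignment(2)[OF \<pi>1_in \<pi>2_in, of S] by simp
  then show ?thesis
    using that \<pi>1_in \<pi>2_in assms(2,3) by (auto simp: \<pi>1_def \<pi>2_def min_absorb2)
qed

lemma align_score_le_split:
  assumes "\<pi> \<in> alignments (length x) (length y)" "i \<le> length x" "j \<le> length y"
    and "\<forall>(a, b) \<in> set \<pi>. (a < i \<and> b < j) \<or> (i \<le> a \<and> j \<le> b)"
  shows "align_score S \<pi> x y \<le> opt_score S (take i x) (take j y) + opt_score S (drop i x) (drop j y)"
proof -
  obtain \<pi>1 \<pi>2 where "\<pi>1 \<in> alignments i j" "\<pi>2 \<in> alignments (length x - i) (length y - j)"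
    "align_score S \<pi> x y = align_score S \<pi>1 (take i x) (take j y) + align_score S \<pi>2 (drop i x) (drop j y)"
    using alignment_split[OF assms] by metis
  moreover have "align_score S \<pi>1 (take i x) (take j y) \<le> opt_score S (take i x) (take j y)"
    by (rule align_score_le_opt_score) (use calculation assms(2,3) in \<open>auto simp: min_def\<close>)
  moreover have "align_score S \<pi>2 (drop i x) (drop j y) \<le> opt_score S (drop i x) (drop j y)"
    by (rule align_score_le_opt_score) (use calculation in auto)
  ultimately show ?thesis
    by linarith
qed

lemma pairwise_le_common_point:
  fixes l u :: "'i \<Rightarrow> 'b::linorder"
  assumes "finite I" "I \<noteq> {}" "\<And>k m. k \<in> I \<Longrightarrow> m \<in> I \<Longrightarrow> l k \<le> u m"
  obtains z where "\<And>k. k \<in> I \<Longrightarrow> l k \<le> z \<and> z \<le> u k"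
proof
  fix k assume "k \<in> I"
  moreover have "Max (l ` I) \<in> l ` I"
    using assms(1,2) by (intro Max_in) auto
  ultimately show "l k \<le> Max (l ` I) \<and> Max (l ` I) \<le> u k"
    using assms by auto
qed

text \<open>Each matched pair confines the cut position \<open>i\<close> to an interval; since no pair lies on
  the antidiagonal \<open>a + b + 1 = t\<close>, these intervals meet pairwise.\<close>
lemma alignment_cut_exists:
  assumes \<pi>: "\<pi> \<in> alignments P Q" and "t \<le> P + Q"
    and no_pair: "\<forall>(a, b) \<in> set \<pi>. a + b + 1 \<noteq> t"
  obtains i j where "i + j = t" "i \<le> P" "j \<le> Q"
    "\<forall>(a, b) \<in> set \<pi>. (a < i \<and> b < j) \<or> (i \<le> a \<and> j \<le> b)"
proof -
  define lo :: "(nat \<times> nat) option \<Rightarrow> int" where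
    "lo = case_option (max 0 (int t - int Q))
            (\<lambda>(a, b). if a + b + 1 < t then int a + 1 else int t - int b)"
  define hi :: "(nat \<times> nat) option \<Rightarrow> int" where
    "hi = case_option (min (int P) (int t))
            (\<lambda>(a, b). if a + b + 1 < t then int t - int b - 1 else int a)"
  have bounds: "a < P \<and> b < Q" if "(a, b) \<in> set \<pi>" for a b
    using \<pi> that by (auto simp: alignments_iff)
  have comparable: "(a = c \<and> b = d) \<or> (a < c \<and> b < d) \<or> (c < a \<and> d < b)"
    if "(a, b) \<in> set \<pi>" "(c, d) \<in> set \<pi>" for a b c d
    using sorted_align_before_comparable[of \<pi> "(a, b)" "(c, d)"] \<pi> that
    by (auto simp: alignments_iff align_before_def)
  obtain z where z: "\<And>k. k \<in> insert None (Some ` set \<pi>) \<Longrightarrow> lo k \<le> z \<and> z \<le> hi k"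
  proof (rule pairwise_le_common_point)
    fix k m assume "k \<in> insert None (Some ` set \<pi>)" "m \<in> insert None (Some ` set \<pi>)"
    then show "lo k \<le> hi m"
      using assms(2) no_pair bounds comparable
      by (auto simp: lo_def hi_def split: if_splits) fastforce+
  qed auto
  define i where "i = nat z"
  have "0 \<le> z" "int t - int Q \<le> z" "z \<le> int P" "z \<le> int t"
    using z[of None] by (auto simp: lo_def hi_def)
  moreover have "(a < i \<and> b < t - i) \<or> (i \<le> a \<and> t - i \<le> b)" if "(a, b) \<in> set \<pi>" for a b
    using z[of "Some (a, b)"] that no_pair calculation
    by (auto simp: lo_def hi_def i_def split: if_splits)
  ultimately show ?thesis
    by (intro that[of i "t - i"]) (auto simp: i_def)
qed

lemma align_score_le_through_pair:
  assumes \<pi>: "\<pi> \<in> alignments (length x) (length y)" and ab: "(a, b) \<in> set \<pi>"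
  shows "align_score S \<pi> x y \<le> opt_score S (take a x) (take b y) + S (Some (x ! a)) (Some (y ! b))
           + opt_score S (drop (Suc a) x) (drop (Suc b) y)"
proof -
  have comparable: "(c = a \<and> d = b) \<or> (c < a \<and> d < b) \<or> (a < c \<and> b < d)" if "(c, d) \<in> set \<pi>" for c d
    using sorted_align_before_comparable[of \<pi> "(a, b)" "(c, d)"] \<pi> ab that
    by (auto simp: alignments_iff align_before_def)
  have a: "a < length x" and b: "b < length y"
    using \<pi> ab by (auto simp: alignments_iff)
  define x' where "x' = take (Suc a) x"
  define y' where "y' = take (Suc b) y"
  obtain \<pi>1 \<pi>2 where \<pi>1: "\<pi>1 \<in> alignments (Suc a) (Suc b)"
      and \<pi>2: "\<pi>2 \<in> alignments (length x - Suc a) (length y - Suc b)"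
      and split: "align_score S \<pi> x y = align_score S \<pi>1 x' y' + align_score S \<pi>2 (drop (Suc a) x) (drop (Suc b) y)"
      and set1: "set \<pi>1 = {u \<in> set \<pi>. fst u < Suc a}"
    by (rule alignment_split[OF \<pi>, of "Suc a" "Suc b"]) (use a b comparable in \<open>force simp: x'_def y'_def\<close>)+
  have lengths: "length x' = Suc a" "length y' = Suc b"
    using a b by (auto simp: x'_def y'_def)
  obtain \<pi>11 \<pi>12 where \<pi>11: "\<pi>11 \<in> alignments a b"
      and \<pi>12: "\<pi>12 \<in> alignments (length x' - a) (length y' - b)"
      and split1: "align_score S \<pi>1 x' y' = align_score S \<pi>11 (take a x') (take b y') + align_score S \<pi>12 (drop a x') (drop b y')"
      and set12: "set \<pi>12 = (\<lambda>(c, d). (c - a, d - b)) ` {u \<in> set \<pi>1. \<not> fst u < a}"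
  proof (rule alignment_split[of \<pi>1 x' y' a b])
    show "\<forall>(c, d) \<in> set \<pi>1. (c < a \<and> d < b) \<or> (a \<le> c \<and> b \<le> d)"
      using comparable unfolding set1 by fastforce
  qed (use \<pi>1 lengths in auto)
  have "{u \<in> set \<pi>1. \<not> fst u < a} = {(a, b)}"
    using ab comparable unfolding set1 by fastforce
  then have "set \<pi>12 = {(0, 0)}"
    by (simp add: set12)
  moreover have "distinct \<pi>12"
    using \<pi>12 by (auto simp: alignments_iff intro: sorted_align_before_distinct)
  ultimately have "\<pi>12 = [(0, 0)]"
    by (cases \<pi>12) (auto simp: subset_singleton_iff)
  moreover have "drop a x' = [x ! a]" "drop b y' = [y ! b]" "take a x' = take a x" "take b y' = take b y"
    using a b by (simp_all add: x'_def y'_def take_Suc_conv_app_nth)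
  ultimately have "align_score S \<pi>1 x' y' = align_score S \<pi>11 (take a x) (take b y) + S (Some (x ! a)) (Some (y ! b))"
    using split1 by (simp add: align_score_def lessThan_Suc)
  moreover have "align_score S \<pi>11 (take a x) (take b y) \<le> opt_score S (take a x) (take b y)"
    by (rule align_score_le_opt_score) (use \<pi>11 a b in auto)
  moreover have "align_score S \<pi>2 (drop (Suc a) x) (drop (Suc b) y) \<le> opt_score S (drop (Suc a) x) (drop (Suc b) y)"
    by (rule align_score_le_opt_score) (use \<pi>2 in auto)
  ultimately show ?thesis
    using split by linarith
qed

lemma swap_alignment:
  assumes sym: "\<And>c d. S c d = S d c" and \<pi>: "\<pi> \<in> alignments (length x) (length y)"
  shows "map prod.swap \<pi> \<in> alignments (length y) (length x)"
    and "align_score S (map prod.swap \<pi>) y x = align_score S \<pi> x y"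
proof -
  show "map prod.swap \<pi> \<in> alignments (length y) (length x)"
    using \<pi> unfolding alignments_iff
    by (auto simp: sorted_wrt_map align_before_def elim!: sorted_wrt_mono_rel[rotated])
  have "fst ` set (map prod.swap \<pi>) = snd ` set \<pi>" "snd ` set (map prod.swap \<pi>) = fst ` set \<pi>"
    by (force simp: image_iff)+
  moreover have "(\<Sum>(i, j) \<leftarrow> map prod.swap \<pi>. S (Some (y ! i)) (Some (x ! j)))
      = (\<Sum>(i, j) \<leftarrow> \<pi>. S (Some (x ! i)) (Some (y ! j)))"
    by (induction \<pi>) (auto simp: sym)
  ultimately show "align_score S (map prod.swap \<pi>) y x = align_score S \<pi> x y"
    unfolding align_score_def by (simp add: sym[of None])
qed

lemma opt_score_commute:
  assumes sym: "\<And>c d. S c d = S d c"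
  shows "opt_score S y x = opt_score S x y"
proof -
  have le: "opt_score S x y \<le> opt_score S y x" for x y
  proof -
    obtain \<pi> where \<pi>: "\<pi> \<in> alignments (length x) (length y)" "opt_score S x y = align_score S \<pi> x y"
      by (rule opt_score_attained)
    show ?thesis
      using align_score_le_opt_score[OF swap_alignment(1)[OF sym \<pi>(1)], of S]
        swap_alignment(2)[OF sym \<pi>(1)] \<pi>(2)
      by simp
  qed
  show ?thesis
    using le[of x y] le[of y x] by simp
qed

lemma align_score_eq_sum_set:
  assumes "distinct \<pi>"
  shows "align_score S \<pi> x y = (\<Sum>(i, j)\<in>set \<pi>. S (Some (x ! i)) (Some (y ! j)))
      + (\<Sum>j\<in>{..<length x} - fst ` set \<pi>. S (Some (x ! j)) None)
      + (\<Sum>j\<in>{..<length y} - snd ` set \<pi>. S None (Some (y ! j)))"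
  using assms by (simp add: align_score_def sum_list_distinct_conv_sum_set)

lemma align_score_update_matched:
  assumes \<pi>: "\<pi> \<in> alignments (length x) (length y)" and kb: "(k, b) \<in> set \<pi>"
  shows "align_score S \<pi> (x[k := c]) y - align_score S \<pi> x y
      = S (Some c) (Some (y ! b)) - S (Some (x ! k)) (Some (y ! b))"
proof -
  let ?M = "\<lambda>z. \<lambda>(i, j). S (Some (z ! i)) (Some (y ! j))"
  have "distinct \<pi>" "k < length x"
    using \<pi> kb by (auto simp: alignments_iff sorted_align_before_distinct)
  have other: "fst u \<noteq> k" if "u \<in> set \<pi> - {(k, b)}" for u
    using sorted_align_before_comparable[of \<pi> "(k, b)" u] \<pi> kb that
    by (cases u) (auto simp: alignments_iff align_before_def)
  have "(\<Sum>u\<in>set \<pi> - {(k, b)}. ?M (x[k := c]) u) = (\<Sum>u\<in>set \<pi> - {(k, b)}. ?M x u)"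
  proof (intro sum.cong refl)
    fix u assume "u \<in> set \<pi> - {(k, b)}"
    then show "?M (x[k := c]) u = ?M x u"
      using other[of u] by (cases u) simp
  qed
  moreover have "(\<Sum>u\<in>set \<pi>. ?M z u) = ?M z (k, b) + (\<Sum>u\<in>set \<pi> - {(k, b)}. ?M z u)" for z
    using kb by (simp add: sum.remove)
  moreover have "(\<Sum>j\<in>{..<length x} - fst ` set \<pi>. S (Some (x[k := c] ! j)) None)
      = (\<Sum>j\<in>{..<length x} - fst ` set \<pi>. S (Some (x ! j)) None)"
    using kb by (intro sum.cong) (auto simp: image_iff)
  ultimately show ?thesis
    using \<open>distinct \<pi>\<close> \<open>k < length x\<close> by (simp add: align_score_eq_sum_set)
qed

lemma align_score_update_unmatched:
  assumes "distinct \<pi>" "k < length x" "k \<notin> fst ` set \<pi>"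
  shows "align_score S \<pi> (x[k := c]) y - align_score S \<pi> x y = S (Some c) None - S (Some (x ! k)) None"
proof -
  let ?G = "{..<length x} - fst ` set \<pi>"
  have "(\<Sum>(i, j)\<in>set \<pi>. S (Some (x[k := c] ! i)) (Some (y ! j))) = (\<Sum>(i, j)\<in>set \<pi>. S (Some (x ! i)) (Some (y ! j)))"
    using assms(3) by (intro sum.cong) (auto simp: image_iff)
  moreover have "(\<Sum>j\<in>?G. S (Some (z ! j)) None) = S (Some (z ! k)) None + (\<Sum>j\<in>?G - {k}. S (Some (z ! j)) None)" for z
    using assms(2,3) by (simp add: sum.remove)
  moreover have "(\<Sum>j\<in>?G - {k}. S (Some (x[k := c] ! j)) None) = (\<Sum>j\<in>?G - {k}. S (Some (x ! j)) None)"
    by (intro sum.cong) auto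
  ultimately show ?thesis
    using assms(1,2) by (simp add: align_score_eq_sum_set)
qed

lemma align_score_update_left:
  assumes \<pi>: "\<pi> \<in> alignments (length x) (length y)" and k: "k < length x"
  obtains e where "align_score S \<pi> (x[k := c]) y - align_score S \<pi> x y = S (Some c) e - S (Some (x ! k)) e"
proof (cases "k \<in> fst ` set \<pi>")
  case True
  then obtain b where "(k, b) \<in> set \<pi>"
    by force
  then show ?thesis
    using align_score_update_matched[OF \<pi>] that by blast
next
  case False
  then show ?thesis
    using align_score_update_unmatched[OF _ k False] \<pi> that
    by (auto simp: alignments_iff sorted_align_before_distinct)
qed

lemma abs_diff_le_delta_norm: "\<bar>S c d - S c e\<bar> \<le> delta_norm S"
proof -
  have "{\<bar>S c d - S c e\<bar> | c d e. True} = (\<lambda>(c, d, e). \<bar>S c d - S c e\<bar>) ` UNIV"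
    by (auto simp: image_iff) blast
  then have "finite {\<bar>S c d - S c e\<bar> | c d e. True}"
    by simp
  then show ?thesis
    unfolding delta_norm_def by (rule Max_ge) blast
qed

lemma abs_le_sup_norm: "\<bar>S c d\<bar> \<le> sup_norm S"
proof -
  have "{\<bar>S c d\<bar> | c d. True} = (\<lambda>(c, d). \<bar>S c d\<bar>) ` UNIV"
    by (auto simp: image_iff)
  then have "finite {\<bar>S c d\<bar> | c d. True}"
    by simp
  then show ?thesis
    unfolding sup_norm_def by (rule Max_ge) blast
qed

lemma delta_norm_nonneg: "0 \<le> delta_norm S"
  using abs_diff_le_delta_norm[of S None None None] by simp

lemma sup_norm_nonneg: "0 \<le> sup_norm S"
  using abs_le_sup_norm[of S None None] by simp

lemma abs_diff_le_delta_norm_left: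
  assumes "\<And>c d. S c d = S d c"
  shows "\<bar>S a e - S b e\<bar> \<le> delta_norm S"
  using abs_diff_le_delta_norm[of S e a b] by (simp add: assms[of _ e])

lemma opt_score_update_left:
  fixes S :: "'a::finite option \<Rightarrow> 'a option \<Rightarrow> real"
  assumes sym: "\<And>c d. S c d = S d c" and k: "k < length x"
  shows "\<bar>opt_score S (x[k := c]) y - opt_score S x y\<bar> \<le> delta_norm S"
proof -
  have le: "opt_score S z y - delta_norm S \<le> opt_score S (z[k := e]) y" if "k < length z" for z e
  proof -
    obtain \<pi> where \<pi>: "\<pi> \<in> alignments (length z) (length y)" "opt_score S z y = align_score S \<pi> z y"
      by (rule opt_score_attained)
    obtain f where "align_score S \<pi> (z[k := e]) y - align_score S \<pi> z y = S (Some e) f - S (Some (z ! k)) f"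
      by (rule align_score_update_left[OF \<pi>(1) \<open>k < length z\<close>])
    then have "align_score S \<pi> z y - delta_norm S \<le> align_score S \<pi> (z[k := e]) y"
      using abs_diff_le_delta_norm_left[where S = S and a = "Some e" and e = f and b = "Some (z ! k)", OF sym] by linarith
    also have "\<dots> \<le> opt_score S (z[k := e]) y"
      by (rule align_score_le_opt_score) (use \<pi> in simp)
    finally show ?thesis
      using \<pi> by simp
  qed
  show ?thesis
    using le[OF k, of c] le[of "x[k := c]" "x ! k"] k by auto
qed

lemma opt_score_update_right:
  fixes S :: "'a::finite option \<Rightarrow> 'a option \<Rightarrow> real"
  assumes sym: "\<And>c d. S c d = S d c" and "k < length y"
  shows "\<bar>opt_score S x (y[k := c]) - opt_score S x y\<bar> \<le> delta_norm S"
  using opt_score_update_left[OF assms] by (simp add: opt_score_commute[OF sym])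

section \<open>Concentration for random strings\<close>

abbreviation expect :: "'b pmf \<Rightarrow> ('b \<Rightarrow> real) \<Rightarrow> real" where
  "expect M f \<equiv> measure_pmf.expectation M f"

lemma expect_cong: "(\<And>x. x \<in> set_pmf M \<Longrightarrow> f x = g x) \<Longrightarrow> expect M f = expect M g"
  by (intro integral_cong_AE) (auto simp: AE_measure_pmf_iff)

lemma expect_mono:
  "finite (set_pmf M) \<Longrightarrow> (\<And>x. x \<in> set_pmf M \<Longrightarrow> f x \<le> g x) \<Longrightarrow> expect M f \<le> expect M g"
  by (intro integral_mono_AE) (auto simp: AE_measure_pmf_iff intro: integrable_measure_pmf_finite)

lemma expect_add: "finite (set_pmf M) \<Longrightarrow> expect M (\<lambda>x. f x + g x) = expect M f + expect M g"
  by (intro Bochner_Integration.integral_add) (auto intro: integrable_measure_pmf_finite)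

lemma expect_diff: "finite (set_pmf M) \<Longrightarrow> expect M (\<lambda>x. f x - g x) = expect M f - expect M g"
  by (intro Bochner_Integration.integral_diff) (auto intro: integrable_measure_pmf_finite)

lemma expect_sum: "finite (set_pmf M) \<Longrightarrow> expect M (\<lambda>x. \<Sum>i\<in>I. f i x) = (\<Sum>i\<in>I. expect M (f i))"
  by (rule Bochner_Integration.integral_sum) (auto intro: integrable_measure_pmf_finite)

lemma abs_expect_le:
  assumes "finite (set_pmf M)" "\<And>x. x \<in> set_pmf M \<Longrightarrow> \<bar>f x\<bar> \<le> d"
  shows "\<bar>expect M f\<bar> \<le> d"
proof -
  have "expect M f \<le> expect M (\<lambda>_. d)"
    using assms by (intro expect_mono) (auto simp: abs_le_iff)
  moreover have "expect M (\<lambda>_. - d) \<le> expect M f"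
    using assms by (intro expect_mono) (fastforce simp: abs_le_iff)+
  ultimately show ?thesis
    by simp
qed

lemma exp_expect_le:
  assumes "finite (set_pmf M)"
  shows "exp (s * expect M f) \<le> expect M (\<lambda>x. exp (s * f x))"
proof -
  let ?m = "expect M f"
  have "expect M (\<lambda>x. exp (s * ?m) * (1 + (s * f x - s * ?m))) \<le> expect M (\<lambda>x. exp (s * f x))"
  proof (rule expect_mono[OF assms])
    fix x
    have "exp (s * ?m) * (1 + (s * f x - s * ?m)) \<le> exp (s * ?m) * exp (s * f x - s * ?m)"
      by (intro mult_left_mono exp_ge_add_one_self) auto
    then show "exp (s * ?m) * (1 + (s * f x - s * ?m)) \<le> exp (s * f x)"
      by (simp add: exp_diff)
  qed
  moreover have "expect M (\<lambda>x. 1 + (s * f x - s * ?m)) = 1"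
    using assms by (simp add: expect_add expect_diff)
  ultimately show ?thesis
    by simp
qed

lemma expect_exp_centered_le:
  fixes p :: "'b::finite pmf" and g :: "'b \<Rightarrow> real"
  assumes "s > 0" and range: "\<And>x x'. g x - g x' \<le> d"
  shows "expect p (\<lambda>x. exp (s * (g x - expect p g))) \<le> exp (s\<^sup>2 * d\<^sup>2 / 8)"
proof -
  define lo where "lo = Min (range g)"
  have "lo \<in> range g"
    unfolding lo_def by (rule Min_in) auto
  then obtain x0 where "g x0 = lo"
    by auto
  then have "g x \<in> {lo..lo + d}" for x
    using range[of x x0] by (auto simp: lo_def)
  then interpret interval_bounded_random_variable "measure_pmf p" g lo "lo + d"
    by unfold_locales auto
  have "nn_integral p (\<lambda>x. exp (s * (g x - expect p g))) \<le> ennreal (exp (s\<^sup>2 * (lo + d - lo)\<^sup>2 / 8))"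
    by (rule Hoeffdings_lemma_nn_integral[OF \<open>s > 0\<close>])
  moreover have "nn_integral p (\<lambda>x. exp (s * (g x - expect p g))) = expect p (\<lambda>x. exp (s * (g x - expect p g)))"
    by (rule nn_integral_eq_integral) (auto intro: integrable_measure_pmf_finite)
  ultimately show ?thesis
    by simp
qed

lemma finite_set_replicate_pmf: "finite (set_pmf (replicate_pmf n (p :: 'a::finite pmf)))"
proof (rule finite_subset)
  show "set_pmf (replicate_pmf n p) \<subseteq> {xs. set xs \<subseteq> UNIV \<and> length xs = n}"
    by (auto simp: set_replicate_pmf)
qed (rule finite_lists_length_eq; simp)

lemma expect_pair_pmf:
  assumes "finite (set_pmf A)" "finite (set_pmf B)"
  shows "expect (pair_pmf A B) h = expect A (\<lambda>a. expect B (\<lambda>b. h (a, b)))"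
proof -
  have "expect (pair_pmf A B) h = (\<Sum>u\<in>set_pmf A \<times> set_pmf B. h u * pmf (pair_pmf A B) u)"
    using assms by (intro integral_measure_pmf_real) auto
  also have "\<dots> = (\<Sum>(a, b)\<in>set_pmf A \<times> set_pmf B. h (a, b) * (pmf A a * pmf B b))"
    by (intro sum.cong) (auto simp: pmf_pair)
  also have "\<dots> = (\<Sum>a\<in>set_pmf A. \<Sum>b\<in>set_pmf B. h (a, b) * (pmf A a * pmf B b))"
    by (simp add: sum.cartesian_product)
  also have "\<dots> = (\<Sum>a\<in>set_pmf A. (\<Sum>b\<in>set_pmf B. h (a, b) * pmf B b) * pmf A a)"
    by (simp add: sum_distrib_right sum_distrib_left mult_ac)
  also have "\<dots> = expect A (\<lambda>a. expect B (\<lambda>b. h (a, b)))"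
    using assms by (simp add: integral_measure_pmf_real)
  finally show ?thesis .
qed

lemma expect_pair_pmf':
  assumes "finite (set_pmf A)" "finite (set_pmf B)"
  shows "expect (pair_pmf A B) h = expect B (\<lambda>b. expect A (\<lambda>a. h (a, b)))"
proof -
  have "expect (pair_pmf A B) h = expect (pair_pmf B A) (\<lambda>(b, a). h (a, b))"
    by (subst pair_commute_pmf) (simp add: case_prod_beta)
  also have "\<dots> = expect B (\<lambda>b. expect A (\<lambda>a. h (a, b)))"
    using assms by (subst expect_pair_pmf) auto
  finally show ?thesis .
qed

lemma replicate_pmf_add:
  "replicate_pmf (m + n) p = map_pmf (\<lambda>(a, b). a @ b) (pair_pmf (replicate_pmf m p) (replicate_pmf n p))"
  by (simp add: replicate_pmf_distrib pair_pmf_def map_bind_pmf bind_assoc_pmf bind_return_pmf map_return_pmf)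

lemma replicate_pmf_Suc_pair:
  "replicate_pmf (Suc n) p = map_pmf (\<lambda>(x, xs). x # xs) (pair_pmf p (replicate_pmf n p))"
  by (simp add: pair_pmf_def map_bind_pmf bind_assoc_pmf bind_return_pmf)

lemma expect_replicate_pmf_add:
  "expect (replicate_pmf (m + n) (p :: 'a::finite pmf)) f
     = expect (replicate_pmf m p) (\<lambda>a. expect (replicate_pmf n p) (\<lambda>b. f (a @ b)))"
  by (simp add: replicate_pmf_add expect_pair_pmf finite_set_replicate_pmf case_prod_beta)

lemma expect_replicate_pmf_Suc:
  "expect (replicate_pmf (Suc m) (p :: 'a::finite pmf)) f
     = expect (replicate_pmf m p) (\<lambda>xs. expect p (\<lambda>x. f (x # xs)))"
  by (simp add: replicate_pmf_Suc_pair expect_pair_pmf' finite_set_replicate_pmf case_prod_beta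
      del: replicate_pmf.simps)

text \<open>Doob martingale argument: average out the first letter, apply the induction hypothesis to
  the remaining letters and Hoeffding's lemma to the first one.\<close>
lemma mcdiarmid_replicate_pmf:
  fixes p :: "'a::finite pmf" and F :: "'a list \<Rightarrow> real"
  assumes "s > 0"
    and "\<And>xs i c. length xs = m \<Longrightarrow> i < m \<Longrightarrow> \<bar>F (xs[i := c]) - F xs\<bar> \<le> d"
  shows "expect (replicate_pmf m p) (\<lambda>xs. exp (s * (F xs - expect (replicate_pmf m p) F)))
      \<le> exp (s\<^sup>2 * real m * d\<^sup>2 / 8)"
  using assms(2)
proof (induction m arbitrary: F)
  case (Suc m)
  define G where "G xs = expect p (\<lambda>x. F (x # xs))" for xs
  define \<mu> where "\<mu> = expect (replicate_pmf m p) G"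
  have "\<bar>G (xs[i := c]) - G xs\<bar> \<le> d" if "length xs = m" "i < m" for xs i c
  proof -
    have "G (xs[i := c]) - G xs = expect p (\<lambda>x. F ((x # xs)[Suc i := c]) - F (x # xs))"
      by (simp add: G_def expect_diff)
    also have "\<bar>\<dots>\<bar> \<le> d"
      by (rule abs_expect_le) (use Suc.prems[of "_ # xs" "Suc i" c] that in auto)
    finally show ?thesis .
  qed
  then have IH: "expect (replicate_pmf m p) (\<lambda>xs. exp (s * (G xs - \<mu>))) \<le> exp (s\<^sup>2 * real m * d\<^sup>2 / 8)"
    unfolding \<mu>_def by (rule Suc.IH)
  have first: "expect p (\<lambda>x. exp (s * (F (x # xs) - \<mu>))) \<le> exp (s * (G xs - \<mu>)) * exp (s\<^sup>2 * d\<^sup>2 / 8)"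
    if "xs \<in> set_pmf (replicate_pmf m p)" for xs
  proof -
    have "expect p (\<lambda>x. exp (s * (F (x # xs) - \<mu>)))
        = exp (s * (G xs - \<mu>)) * expect p (\<lambda>x. exp (s * (F (x # xs) - G xs)))"
      by (simp add: mult_exp_exp algebra_simps flip: integral_mult_right_zero)
    also have "expect p (\<lambda>x. exp (s * (F (x # xs) - G xs))) \<le> exp (s\<^sup>2 * d\<^sup>2 / 8)"
      unfolding G_def
    proof (rule expect_exp_centered_le[OF \<open>s > 0\<close>])
      fix x x'
      show "F (x # xs) - F (x' # xs) \<le> d"
        using Suc.prems[of "x' # xs" 0 x] that by (simp add: set_replicate_pmf)
    qed
    finally show ?thesis
      by (simp add: mult_left_mono)
  qed
  have "expect (replicate_pmf (Suc m) p) (\<lambda>ys. exp (s * (F ys - expect (replicate_pmf (Suc m) p) F)))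
      = expect (replicate_pmf m p) (\<lambda>xs. expect p (\<lambda>x. exp (s * (F (x # xs) - \<mu>))))"
    by (simp add: expect_replicate_pmf_Suc \<mu>_def G_def[abs_def] del: replicate_pmf.simps)
  also have "\<dots> \<le> expect (replicate_pmf m p) (\<lambda>xs. exp (s * (G xs - \<mu>)) * exp (s\<^sup>2 * d\<^sup>2 / 8))"
    by (rule expect_mono[OF finite_set_replicate_pmf]) (rule first)
  also have "\<dots> \<le> exp (s\<^sup>2 * real m * d\<^sup>2 / 8) * exp (s\<^sup>2 * d\<^sup>2 / 8)"
    using IH by simp
  also have "\<dots> = exp (s\<^sup>2 * real (Suc m) * d\<^sup>2 / 8)"
    by (simp add: mult_exp_exp algebra_simps add_divide_distrib)
  finally show ?case .
qed simp

definition string_pair_pmf :: "nat \<Rightarrow> nat \<Rightarrow> 'b pmf \<Rightarrow> ('b list \<times> 'b list) pmf" where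
  "string_pair_pmf P Q p = pair_pmf (replicate_pmf P p) (replicate_pmf Q p)"

lemma finite_set_string_pair_pmf: "finite (set_pmf (string_pair_pmf P Q (p :: 'a::finite pmf)))"
  by (simp add: string_pair_pmf_def finite_set_replicate_pmf)

lemma length_in_set_string_pair_pmf:
  "u \<in> set_pmf (string_pair_pmf P Q p) \<Longrightarrow> length (fst u) = P \<and> length (snd u) = Q"
  by (auto simp: string_pair_pmf_def set_replicate_pmf)

lemma expect_string_pair_pmf:
  "expect (string_pair_pmf P Q (p :: 'a::finite pmf)) h
     = expect (replicate_pmf P p) (\<lambda>x. expect (replicate_pmf Q p) (\<lambda>y. h (x, y)))"
  unfolding string_pair_pmf_def by (rule expect_pair_pmf) (auto simp: finite_set_replicate_pmf)

lemma expect_string_pair_pmf_swap: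
  "expect (string_pair_pmf P Q p) (\<lambda>u. h (fst u) (snd u)) = expect (string_pair_pmf Q P p) (\<lambda>u. h (snd u) (fst u))"
  unfolding string_pair_pmf_def by (subst pair_commute_pmf) (simp add: case_prod_beta)

lemma expect_string_pair_pmf_as_replicate:
  "expect (string_pair_pmf P Q (p :: 'a::finite pmf)) h
     = expect (replicate_pmf (P + Q) p) (\<lambda>z. h (take P z, drop P z))"
proof -
  have "expect (replicate_pmf (P + Q) p) (\<lambda>z. h (take P z, drop P z))
      = expect (string_pair_pmf P Q p) (\<lambda>u. h (take P (fst u @ snd u), drop P (fst u @ snd u)))"
    by (simp add: replicate_pmf_add string_pair_pmf_def case_prod_beta)
  also have "\<dots> = expect (string_pair_pmf P Q p) h"
    by (intro expect_cong) (auto dest: length_in_set_string_pair_pmf)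
  finally show ?thesis
    by simp
qed

lemma mcdiarmid_string_pair_pmf:
  fixes p :: "'a::finite pmf" and H :: "'a list \<times> 'a list \<Rightarrow> real"
  assumes "s > 0"
    and bound_left: "\<And>x y k c. length x = P \<Longrightarrow> length y = Q \<Longrightarrow> k < P \<Longrightarrow> \<bar>H (x[k := c], y) - H (x, y)\<bar> \<le> d"
    and bound_right: "\<And>x y k c. length x = P \<Longrightarrow> length y = Q \<Longrightarrow> k < Q \<Longrightarrow> \<bar>H (x, y[k := c]) - H (x, y)\<bar> \<le> d"
  shows "expect (string_pair_pmf P Q p) (\<lambda>u. exp (s * H u))
      \<le> exp (s * expect (string_pair_pmf P Q p) H + s\<^sup>2 * real (P + Q) * d\<^sup>2 / 8)"
proof -
  define F where "F z = H (take P z, drop P z)" for z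
  define \<mu> where "\<mu> = expect (replicate_pmf (P + Q) p) F"
  have "\<bar>F (z[i := c]) - F z\<bar> \<le> d" if "length z = P + Q" "i < P + Q" for z i c
  proof (cases "i < P")
    case True
    then show ?thesis
      using bound_left[of "take P z" "drop P z" i c] that by (simp add: F_def take_update_swap)
  next
    case False
    then show ?thesis
      using bound_right[of "take P z" "drop P z" "i - P" c] that by (simp add: F_def drop_update_swap)
  qed
  then have mcd: "expect (replicate_pmf (P + Q) p) (\<lambda>z. exp (s * (F z - \<mu>))) \<le> exp (s\<^sup>2 * real (P + Q) * d\<^sup>2 / 8)"
    unfolding \<mu>_def by (intro mcdiarmid_replicate_pmf[OF \<open>s > 0\<close>])
  have "expect (string_pair_pmf P Q p) (\<lambda>u. exp (s * H u))
      = exp (s * \<mu>) * expect (replicate_pmf (P + Q) p) (\<lambda>z. exp (s * (F z - \<mu>)))"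
    by (simp add: expect_string_pair_pmf_as_replicate F_def mult_exp_exp algebra_simps
        flip: integral_mult_right_zero)
  also have "\<dots> \<le> exp (s * \<mu>) * exp (s\<^sup>2 * real (P + Q) * d\<^sup>2 / 8)"
    using mcd by simp
  also have "\<mu> = expect (string_pair_pmf P Q p) H"
    by (simp add: \<mu>_def F_def[abs_def] expect_string_pair_pmf_as_replicate)
  finally show ?thesis
    by (simp add: mult_exp_exp)
qed

lemma expect_string_pair_pmf_split_mult:
  fixes p :: "'a::finite pmf"
  assumes "i \<le> P" "j \<le> Q"
  shows "expect (string_pair_pmf P Q p) (\<lambda>u. F (take i (fst u), take j (snd u)) * G (drop i (fst u), drop j (snd u)))
       = expect (string_pair_pmf i j p) F * expect (string_pair_pmf (P - i) (Q - j) p) G"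
proof -
  have P: "P = i + (P - i)" and Q: "Q = j + (Q - j)"
    using assms by auto
  have "expect (string_pair_pmf P Q p) (\<lambda>u. F (take i (fst u), take j (snd u)) * G (drop i (fst u), drop j (snd u)))
     = expect (replicate_pmf (i + (P - i)) p) (\<lambda>x. expect (replicate_pmf (j + (Q - j)) p)
         (\<lambda>y. F (take i x, take j y) * G (drop i x, drop j y)))"
    by (subst P, subst Q) (simp add: expect_string_pair_pmf)
  also have "\<dots> = expect (replicate_pmf i p) (\<lambda>x1. expect (replicate_pmf (P - i) p) (\<lambda>x2.
        expect (replicate_pmf j p) (\<lambda>y1. expect (replicate_pmf (Q - j) p) (\<lambda>y2.
          F (take i (x1 @ x2), take j (y1 @ y2)) * G (drop i (x1 @ x2), drop j (y1 @ y2))))))"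
    by (simp add: expect_replicate_pmf_add)
  also have "\<dots> = expect (replicate_pmf i p) (\<lambda>x1. expect (replicate_pmf (P - i) p) (\<lambda>x2.
        expect (replicate_pmf j p) (\<lambda>y1. expect (replicate_pmf (Q - j) p) (\<lambda>y2. F (x1, y1) * G (x2, y2)))))"
    by (intro expect_cong) (auto simp: set_replicate_pmf)
  also have "\<dots> = expect (string_pair_pmf i j p) F * expect (string_pair_pmf (P - i) (Q - j) p) G"
    by (simp add: expect_string_pair_pmf)
  finally show ?thesis .
qed

lemma expect_string_pair_pmf_split_add:
  fixes p :: "'a::finite pmf"
  assumes "i \<le> P" "j \<le> Q"
  shows "expect (string_pair_pmf P Q p) (\<lambda>u. F (take i (fst u), take j (snd u)) + G (drop i (fst u), drop j (snd u)))
       = expect (string_pair_pmf i j p) F + expect (string_pair_pmf (P - i) (Q - j) p) G"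
  using expect_string_pair_pmf_split_mult[OF assms, of p F "\<lambda>_. 1"]
    expect_string_pair_pmf_split_mult[OF assms, of p "\<lambda>_. 1" G]
  by (simp add: expect_add finite_set_string_pair_pmf)

lemma superadditive_iterate:
  fixes f :: "nat \<Rightarrow> real"
  assumes "\<And>m n. f m + f n \<le> f (m + n)"
  shows "real q * f m + f r \<le> f (q * m + r)"
proof (induction q)
  case (Suc q)
  then show ?case
    using assms[of m "q * m + r"] by (simp add: algebra_simps)
qed simp

lemma superadditive_ratio_lower_bound:
  fixes f :: "nat \<Rightarrow> real"
  assumes superadd: "\<And>m n. f m + f n \<le> f (m + n)" and "m \<ge> 1"
  obtains c where "\<And>N. N \<ge> 1 \<Longrightarrow> f m / real m - c / real N \<le> f N / real N"
proof
  define c where "c = \<bar>f m\<bar> + \<bar>Min (f ` {..<m})\<bar>"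
  fix N :: nat assume "N \<ge> 1"
  define q r where "q = N div m" and "r = N mod m"
  have N: "N = q * m + r" and "r < m"
    using \<open>m \<ge> 1\<close> by (simp_all add: q_def r_def)
  have "Min (f ` {..<m}) \<le> f r"
    using \<open>r < m\<close> by (intro Min_le) auto
  moreover have "real N * f m / real m - \<bar>f m\<bar> \<le> real q * f m"
  proof -
    have "real q * real m \<le> real N" "real N - real m \<le> real q * real m"
      using N \<open>r < m\<close> by (simp_all flip: of_nat_mult of_nat_add)
    then have "\<bar>real N / real m - real q\<bar> \<le> 1"
      using \<open>m \<ge> 1\<close> by (simp add: abs_le_iff field_simps)
    then have "\<bar>(real N / real m - real q) * f m\<bar> \<le> \<bar>f m\<bar>"
      by (simp add: abs_mult mult_left_le_one_le)
    then show ?thesis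
      by (simp add: left_diff_distrib abs_le_iff)
  qed
  ultimately have "real N * f m / real m - c \<le> real q * f m + f r"
    by (simp add: c_def)
  also have "\<dots> \<le> f N"
    using superadditive_iterate[of f, OF superadd, of q m r] N by simp
  finally have "(real N * f m / real m - c) / real N \<le> f N / real N"
    using \<open>N \<ge> 1\<close> by (intro divide_right_mono) auto
  then show "f m / real m - c / real N \<le> f N / real N"
    using \<open>N \<ge> 1\<close> by (simp add: diff_divide_distrib)
qed

lemma superadditive_limit:
  fixes f :: "nat \<Rightarrow> real"
  assumes superadd: "\<And>m n. f m + f n \<le> f (m + n)"
    and bdd: "bdd_above ((\<lambda>n. f n / real n) ` {1..})"
  shows "(\<lambda>n. f n / real n) \<longlonglongrightarrow> (SUP n\<in>{1..}. f n / real n)"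
proof (rule LIMSEQ_I)
  let ?g = "\<lambda>n. f n / real n" and ?L = "SUP n\<in>{1..}. f n / real n"
  fix r :: real assume "r > 0"
  then obtain m where m: "m \<ge> 1" "?L - r / 2 < ?g m"
    using less_cSUP_iff[OF _ bdd, of "?L - r / 2"] by auto
  obtain c where c: "\<And>N. N \<ge> 1 \<Longrightarrow> ?g m - c / real N \<le> ?g N"
    using superadditive_ratio_lower_bound[OF superadd m(1)] by blast
  obtain N0 :: nat where N0: "2 * \<bar>c\<bar> / r < real N0"
    using reals_Archimedean2 by blast
  show "\<exists>no. \<forall>N\<ge>no. norm (?g N - ?L) < r"
  proof (intro exI allI impI)
    fix N assume N: "N \<ge> max 1 N0"
    then have "2 * \<bar>c\<bar> / r < real N"
      using N0 of_nat_mono[of N0 N] by linarith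
    then have "c / real N < r / 2"
      using N \<open>r > 0\<close> by (simp add: field_simps)
    moreover have "?g N \<le> ?L"
      using N bdd by (intro cSUP_upper) auto
    ultimately show "norm (?g N - ?L) < r"
      using c[of N] m(2) N by auto
  qed
qed

lemma le_add_sqrt_of_forall_pos:
  fixes u l d L n :: real
  assumes "0 \<le> d" "0 < L" "0 < n"
    and bound: "\<And>s. s > 0 \<Longrightarrow> u \<le> l + s * d\<^sup>2 / 4 + 2 * L / (s * n)"
  shows "u \<le> l + d * sqrt (2 * L / n)"
proof (cases "d = 0")
  case True
  show ?thesis
  proof (rule ccontr)
    assume "\<not> ?thesis"
    then have gap: "u - l > 0"
      using True by simp
    have "u \<le> l + 2 * L / ((4 * L / (n * (u - l))) * n)"
      using bound[of "4 * L / (n * (u - l))"] gap assms True by simp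
    also have "\<dots> = l + (u - l) / 2"
      using gap assms by (simp add: field_simps)
    finally show False
      using gap by (simp add: field_simps)
  qed
next
  case False
  define w where "w = sqrt (2 * L / n)"
  have "w > 0" "w\<^sup>2 = 2 * L / n"
    using assms by (simp_all add: w_def)
  then have "(2 * w / d) * d\<^sup>2 / 4 + 2 * L / ((2 * w / d) * n) = d * w"
    using False assms by (simp add: field_simps power2_eq_square)
  then show ?thesis
    using bound[of "2 * w / d"] \<open>w > 0\<close> False assms by (simp add: w_def)
qed

lemma sqrt_ln_odd_le:
  assumes "n \<ge> 2"
  shows "sqrt (2 * ln (real (2 * n + 1)) / real n)
       \<le> sqrt ((2 * ln 3 + 2 * ln (real n + 2)) / ln (real n)) * sqrt (ln (real n)) / sqrt (real n)"
proof -
  have "ln (real n) > 0"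
    using assms by simp
  then have "sqrt ((2 * ln 3 + 2 * ln (real n + 2)) / ln (real n)) * sqrt (ln (real n))
      = sqrt (2 * ln 3 + 2 * ln (real n + 2))"
    by (simp flip: real_sqrt_mult)
  then have sqrt_eq: "sqrt ((2 * ln 3 + 2 * ln (real n + 2)) / ln (real n)) * sqrt (ln (real n)) / sqrt (real n)
      = sqrt ((2 * ln 3 + 2 * ln (real n + 2)) / real n)"
    by (simp add: real_sqrt_divide)
  have "ln (real (2 * n + 1)) \<le> ln (3 * (real n + 2))"
    by simp
  also have "\<dots> = ln 3 + ln (real n + 2)"
    by (rule ln_mult_pos) auto
  finally show ?thesis
    unfolding sqrt_eq by (intro real_sqrt_le_mono divide_right_mono) auto
qed

locale alignment_model =
  fixes p :: "'a::finite pmf" and S :: "'a option \<Rightarrow> 'a option \<Rightarrow> real"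
  assumes sym: "\<And>c d. S c d = S d c"
begin

definition mean_score :: "nat \<Rightarrow> nat \<Rightarrow> real" where
  "mean_score P Q = expect (string_pair_pmf P Q p) (\<lambda>(x, y). opt_score S x y)"

definition mean_match :: real where
  "mean_match = expect (string_pair_pmf 1 1 p) (\<lambda>(x, y). S (Some (hd x)) (Some (hd y)))"

lemma lambda_n_eq: "lambda_n p S n = mean_score n n / real n"
  by (simp add: lambda_n_def mean_score_def string_pair_pmf_def)

lemma mean_score_0: "mean_score 0 0 = 0"
  by (simp add: mean_score_def string_pair_pmf_def opt_score_Nil)

lemma mean_score_superadditive: "mean_score P1 Q1 + mean_score P2 Q2 \<le> mean_score (P1 + P2) (Q1 + Q2)"
proof -
  have "mean_score P1 Q1 + mean_score P2 Q2 = expect (string_pair_pmf (P1 + P2) (Q1 + Q2) p)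
      (\<lambda>u. (\<lambda>(x, y). opt_score S x y) (take P1 (fst u), take Q1 (snd u))
         + (\<lambda>(x, y). opt_score S x y) (drop P1 (fst u), drop Q1 (snd u)))"
    unfolding mean_score_def by (subst expect_string_pair_pmf_split_add) auto
  also have "\<dots> \<le> mean_score (P1 + P2) (Q1 + Q2)"
    unfolding mean_score_def
  proof (rule expect_mono[OF finite_set_string_pair_pmf])
    fix u :: "'a list \<times> 'a list"
    show "(\<lambda>(x, y). opt_score S x y) (take P1 (fst u), take Q1 (snd u))
        + (\<lambda>(x, y). opt_score S x y) (drop P1 (fst u), drop Q1 (snd u)) \<le> (\<lambda>(x, y). opt_score S x y) u"
      using opt_score_append_superadditive[of S "take P1 (fst u)" "take Q1 (snd u)" "drop P1 (fst u)" "drop Q1 (snd u)"]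
      by (simp add: case_prod_beta)
  qed
  finally show ?thesis .
qed

lemma mean_score_commute: "mean_score P Q = mean_score Q P"
  using expect_string_pair_pmf_swap[of P Q p "opt_score S"]
  by (simp add: mean_score_def case_prod_unfold opt_score_commute[OF sym])

lemma mean_score_le_half: "mean_score P Q \<le> mean_score (P + Q) (P + Q) / 2"
  using mean_score_superadditive[of P Q Q P] mean_score_commute[of P Q] by (simp add: add.commute)

lemma mean_match_le: "mean_match \<le> mean_score 1 1"
  unfolding mean_match_def mean_score_def
proof (rule expect_mono[OF finite_set_string_pair_pmf])
  fix u assume "u \<in> set_pmf (string_pair_pmf 1 1 p)"
  then obtain c d where "u = ([c], [d])"
    using length_in_set_string_pair_pmf[of u 1 1 p] by (cases u) (auto simp: length_Suc_conv)
  then show "(\<lambda>(x, y). S (Some (hd x)) (Some (hd y))) u \<le> (\<lambda>(x, y). opt_score S x y) u"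
    by (simp add: opt_score_singleton_ge)
qed

lemma mean_match_le_lambda_n:
  assumes "n \<ge> 1"
  shows "mean_match \<le> lambda_n p S n"
proof -
  have "real n * mean_match \<le> real n * mean_score 1 1"
    using mean_match_le by (intro mult_left_mono) auto
  also have "\<dots> \<le> mean_score n n"
    using superadditive_iterate[of "\<lambda>N. mean_score N N" n 1 0, OF mean_score_superadditive]
    by (simp add: mean_score_0)
  finally show ?thesis
    using assms by (simp add: lambda_n_eq field_simps)
qed

lemma mean_score_add_mean_match: "n \<ge> 1 \<Longrightarrow> mean_score (n - 1) (n - 1) + mean_match \<le> mean_score n n"
  using mean_score_superadditive[of "n - 1" "n - 1" 1 1] mean_match_le by simp

definition matched_pair_score :: "nat \<Rightarrow> nat \<Rightarrow> 'a list \<times> 'a list \<Rightarrow> real" where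
  "matched_pair_score a b u = opt_score S (take a (fst u)) (take b (snd u)) + S (Some (fst u ! a)) (Some (snd u ! b))"

lemma expect_matched_pair_score: "expect (string_pair_pmf (Suc a) (Suc b) p) (matched_pair_score a b) = mean_score a b + mean_match"
proof -
  have "expect (string_pair_pmf (Suc a) (Suc b) p) (matched_pair_score a b)
      = expect (string_pair_pmf (Suc a) (Suc b) p)
          (\<lambda>u. (\<lambda>(x, y). opt_score S x y) (take a (fst u), take b (snd u))
             + (\<lambda>(x, y). S (Some (hd x)) (Some (hd y))) (drop a (fst u), drop b (snd u)))"
    by (intro expect_cong)
      (auto simp: matched_pair_score_def hd_drop_conv_nth dest!: length_in_set_string_pair_pmf)
  also have "\<dots> = mean_score a b + mean_match"
    by (subst expect_string_pair_pmf_split_add) (auto simp: mean_score_def mean_match_def)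
  finally show ?thesis .
qed

lemma matched_pair_score_update_left:
  assumes "length x = Suc a" "k < Suc a"
  shows "\<bar>matched_pair_score a b (x[k := c], y) - matched_pair_score a b (x, y)\<bar> \<le> delta_norm S"
proof (cases "k < a")
  case True
  then show ?thesis
    using opt_score_update_left[where S = S and x = "take a x" and y = "take b y", OF sym] assms
    by (simp add: matched_pair_score_def take_update_swap)
next
  case False
  then have "k = a"
    using assms by simp
  then show ?thesis
    using assms abs_diff_le_delta_norm_left[where S = S and a = "Some c" and b = "Some (x ! a)", OF sym]
    by (simp add: matched_pair_score_def)
qed

lemma matched_pair_score_update_right:
  assumes "length y = Suc b" "k < Suc b"
  shows "\<bar>matched_pair_score a b (x, y[k := c]) - matched_pair_score a b (x, y)\<bar> \<le> delta_norm S"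
proof (cases "k < b")
  case True
  then show ?thesis
    using opt_score_update_right[where S = S and x = "take a x" and y = "take b y", OF sym] assms
    by (simp add: matched_pair_score_def take_update_swap)
next
  case False
  then have "k = b"
    using assms by simp
  then show ?thesis
    using assms abs_diff_le_delta_norm[of S "Some (x ! a)" "Some c" "Some (y ! b)"]
    by (simp add: matched_pair_score_def)
qed

end

section \<open>The moment generating function of the optimal score\<close>

context alignment_model
begin

definition score_mgf :: "real \<Rightarrow> nat \<Rightarrow> nat \<Rightarrow> real" where
  "score_mgf s P Q = expect (string_pair_pmf P Q p) (\<lambda>u. exp (s * opt_score S (fst u) (snd u)))"

definition mgf_rate :: "nat \<Rightarrow> real \<Rightarrow> real" where
  "mgf_rate n s = s * lambda_n p S n / 2 + s\<^sup>2 * (delta_norm S)\<^sup>2 / 8"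

lemma score_mgf_nonneg: "0 \<le> score_mgf s P Q"
  unfolding score_mgf_def by (rule integral_nonneg_AE) auto

lemma score_mgf_0: "score_mgf s 0 0 = 1"
  by (simp add: score_mgf_def string_pair_pmf_def opt_score_Nil)

lemma exp_mean_score_le_score_mgf: "exp (s * mean_score P Q) \<le> score_mgf s P Q"
  using exp_expect_le[OF finite_set_string_pair_pmf[of P Q p], of s "\<lambda>u. opt_score S (fst u) (snd u)"]
  by (simp add: mean_score_def score_mgf_def case_prod_unfold)

lemma score_mgf_block_le:
  assumes "n \<ge> 1" "s > 0" "i + j = n"
  shows "score_mgf s i j \<le> exp (real n * mgf_rate n s)"
proof -
  have "score_mgf s i j \<le> exp (s * mean_score i j + s\<^sup>2 * real (i + j) * (delta_norm S)\<^sup>2 / 8)"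
    unfolding score_mgf_def mean_score_def case_prod_unfold
    by (rule mcdiarmid_string_pair_pmf[OF \<open>s > 0\<close>])
      (auto intro: opt_score_update_left[OF sym] opt_score_update_right[OF sym])
  also have "\<dots> \<le> exp (s * (real n * lambda_n p S n / 2) + s\<^sup>2 * real n * (delta_norm S)\<^sup>2 / 8)"
    using mean_score_le_half[of i j] assms by (simp add: lambda_n_eq)
  also have "\<dots> = exp (real n * mgf_rate n s)"
    by (simp add: mgf_rate_def algebra_simps)
  finally show ?thesis .
qed

lemma mean_score_matched_pair_le:
  assumes "n \<ge> 1" "a + b + 1 = n"
  shows "mean_score a b + mean_match \<le> real (n + 1) * lambda_n p S n / 2"
proof -
  have "n - 1 = a + b"
    using assms(2) by simp
  then have "mean_score a b \<le> mean_score (n - 1) (n - 1) / 2"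
    using mean_score_le_half[of a b] by simp
  moreover have "mean_score (n - 1) (n - 1) + mean_match \<le> real n * lambda_n p S n"
    using mean_score_add_mean_match[OF assms(1)] assms(1) by (simp add: lambda_n_eq)
  moreover have "mean_match \<le> lambda_n p S n"
    using mean_match_le_lambda_n[OF assms(1)] .
  ultimately show ?thesis
    by (simp add: field_simps)
qed

lemma matched_pair_mgf_le:
  assumes "n \<ge> 1" "s > 0" "a + b + 1 = n"
  shows "expect (string_pair_pmf (Suc a) (Suc b) p) (\<lambda>u. exp (s * matched_pair_score a b u)) \<le> exp (real (n + 1) * mgf_rate n s)"
proof -
  have "expect (string_pair_pmf (Suc a) (Suc b) p) (\<lambda>u. exp (s * matched_pair_score a b u))
      \<le> exp (s * (mean_score a b + mean_match) + s\<^sup>2 * real (Suc a + Suc b) * (delta_norm S)\<^sup>2 / 8)"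
    using mcdiarmid_string_pair_pmf[OF \<open>s > 0\<close>, of "Suc a" "Suc b" "matched_pair_score a b" "delta_norm S" p]
      matched_pair_score_update_left matched_pair_score_update_right
    by (simp add: expect_matched_pair_score)
  also have "\<dots> \<le> exp (s * (real (n + 1) * lambda_n p S n / 2) + s\<^sup>2 * real (n + 1) * (delta_norm S)\<^sup>2 / 8)"
    using mean_score_matched_pair_le[OF assms(1,3)] assms by simp
  also have "\<dots> = exp (real (n + 1) * mgf_rate n s)"
    by (simp add: mgf_rate_def algebra_simps)
  finally show ?thesis .
qed

text \<open>Index \<open>i\<close> stands for the cut \<open>(i, n - i)\<close>, index \<open>a\<close> for the matched pair \<open>(a, n - 1 - a)\<close>.\<close>
definition cut_points :: "nat \<Rightarrow> nat \<Rightarrow> nat \<Rightarrow> nat set" where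
  "cut_points n P Q = {i. i \<le> n \<and> i \<le> P \<and> n - i \<le> Q}"

definition matched_pair_points :: "nat \<Rightarrow> nat \<Rightarrow> nat \<Rightarrow> nat set" where
  "matched_pair_points n P Q = {a. a < n \<and> a < P \<and> n - 1 - a < Q}"

lemma finite_cut_points: "finite (cut_points n P Q)"
  unfolding cut_points_def by (rule finite_subset[of _ "{..n}"]) auto

lemma finite_matched_pair_points: "finite (matched_pair_points n P Q)"
  unfolding matched_pair_points_def by (rule finite_subset[of _ "{..<n}"]) auto

lemma card_cut_points_matched_pair_points: "card (cut_points n P Q) + card (matched_pair_points n P Q) \<le> 2 * n + 1"
proof -
  have "card (cut_points n P Q) \<le> card {..n}" "card (matched_pair_points n P Q) \<le> card {..<n}"
    unfolding cut_points_def matched_pair_points_def by (intro card_mono; auto)+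
  then show ?thesis
    by simp
qed

lemma opt_score_le_cut_or_matched_pair:
  assumes "length x = P" "length y = Q" "n \<le> P + Q"
  shows "(\<exists>i\<in>cut_points n P Q.
            opt_score S x y \<le> opt_score S (take i x) (take (n - i) y) + opt_score S (drop i x) (drop (n - i) y))
       \<or> (\<exists>a\<in>matched_pair_points n P Q.
            opt_score S x y \<le> matched_pair_score a (n - 1 - a) (take (Suc a) x, take (n - a) y)
                               + opt_score S (drop (Suc a) x) (drop (n - a) y))"
proof -
  obtain \<pi> where \<pi>: "\<pi> \<in> alignments (length x) (length y)" and opt: "opt_score S x y = align_score S \<pi> x y"
    by (rule opt_score_attained)
  show ?thesis
  proof (cases "\<exists>(a, b) \<in> set \<pi>. a + b + 1 = n")
    case True
    then obtain a b where ab: "(a, b) \<in> set \<pi>" "a + b + 1 = n"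
      by auto
    have "a < P" "b < Q"
      using \<pi> ab assms(1,2) by (auto simp: alignments_iff)
    then have "a \<in> matched_pair_points n P Q" and eq: "n - 1 - a = b" "n - a = Suc b"
      and "matched_pair_score a b (take (Suc a) x, take (Suc b) y) = opt_score S (take a x) (take b y) + S (Some (x ! a)) (Some (y ! b))"
      using ab assms(1,2) by (auto simp: matched_pair_points_def matched_pair_score_def min_def)
    moreover have "opt_score S x y \<le> matched_pair_score a (n - 1 - a) (take (Suc a) x, take (n - a) y)
        + opt_score S (drop (Suc a) x) (drop (n - a) y)"
      unfolding eq using align_score_le_through_pair[OF \<pi> ab(1), of S] calculation(4) by (simp add: opt)
    ultimately show ?thesis
      by blast
  next
    case False
    obtain i j where ij: "i + j = n" "i \<le> P" "j \<le> Q"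
      and cut: "\<forall>(a, b) \<in> set \<pi>. (a < i \<and> b < j) \<or> (i \<le> a \<and> j \<le> b)"
    proof (rule alignment_cut_exists[of \<pi> P Q n])
      show "\<pi> \<in> alignments P Q"
        using \<pi> assms(1,2) by simp
    qed (use False assms(3) in auto)
    then have "i \<in> cut_points n P Q" "j = n - i"
      by (auto simp: cut_points_def)
    moreover have "opt_score S x y \<le> opt_score S (take i x) (take j y) + opt_score S (drop i x) (drop j y)"
      unfolding opt by (rule align_score_le_split[OF \<pi> _ _ cut]) (use ij assms(1,2) in auto)
    ultimately show ?thesis
      by blast
  qed
qed

lemma exp_opt_score_le_decomposition:
  assumes "s > 0" "length x = P" "length y = Q" "n \<le> P + Q"
  shows "exp (s * opt_score S x y) \<le>
     (\<Sum>i\<in>cut_points n P Q. exp (s * opt_score S (take i x) (take (n - i) y)) * exp (s * opt_score S (drop i x) (drop (n - i) y)))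
   + (\<Sum>a\<in>matched_pair_points n P Q. exp (s * matched_pair_score a (n - 1 - a) (take (Suc a) x, take (n - a) y))
                              * exp (s * opt_score S (drop (Suc a) x) (drop (n - a) y)))"
    (is "_ \<le> ?cuts + ?pairs")
proof -
  have "0 \<le> ?cuts" "0 \<le> ?pairs"
    by (intro sum_nonneg; simp)+
  have exp_le: "exp (s * L) \<le> exp (s * L1) * exp (s * L2)" if "L \<le> L1 + L2" for L L1 L2
    using that \<open>s > 0\<close> by (simp add: mult_exp_exp flip: distrib_left)
  from opt_score_le_cut_or_matched_pair[OF assms(2-4)] show ?thesis
  proof (elim disjE bexE)
    fix i assume i: "i \<in> cut_points n P Q"
      and le: "opt_score S x y \<le> opt_score S (take i x) (take (n - i) y) + opt_score S (drop i x) (drop (n - i) y)"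
    from le have "exp (s * opt_score S x y)
        \<le> exp (s * opt_score S (take i x) (take (n - i) y)) * exp (s * opt_score S (drop i x) (drop (n - i) y))"
      by (rule exp_le)
    also have "\<dots> \<le> ?cuts"
      using i by (intro member_le_sum finite_cut_points) auto
    finally show ?thesis
      using \<open>0 \<le> ?pairs\<close> by linarith
  next
    fix a assume a: "a \<in> matched_pair_points n P Q"
      and le: "opt_score S x y \<le> matched_pair_score a (n - 1 - a) (take (Suc a) x, take (n - a) y)
                               + opt_score S (drop (Suc a) x) (drop (n - a) y)"
    from le have "exp (s * opt_score S x y) \<le> exp (s * matched_pair_score a (n - 1 - a) (take (Suc a) x, take (n - a) y))
        * exp (s * opt_score S (drop (Suc a) x) (drop (n - a) y))"
      by (rule exp_le)
    also have "\<dots> \<le> ?pairs"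
      using a by (intro member_le_sum finite_matched_pair_points) auto
    finally show ?thesis
      using \<open>0 \<le> ?cuts\<close> by linarith
  qed
qed

lemma score_mgf_le_sum_products:
  assumes "s > 0" "n \<le> P + Q"
  shows "score_mgf s P Q \<le>
     (\<Sum>i\<in>cut_points n P Q. score_mgf s i (n - i) * score_mgf s (P - i) (Q - (n - i)))
   + (\<Sum>a\<in>matched_pair_points n P Q. expect (string_pair_pmf (Suc a) (n - a) p) (\<lambda>u. exp (s * matched_pair_score a (n - 1 - a) u))
                              * score_mgf s (P - Suc a) (Q - (n - a)))"
proof -
  let ?E = "\<lambda>v :: 'a list \<times> 'a list. exp (s * opt_score S (fst v) (snd v))"
  let ?J = "\<lambda>a v. exp (s * matched_pair_score a (n - 1 - a) v)"
  have "score_mgf s P Q \<le> expect (string_pair_pmf P Q p) (\<lambda>u.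
       (\<Sum>i\<in>cut_points n P Q. ?E (take i (fst u), take (n - i) (snd u)) * ?E (drop i (fst u), drop (n - i) (snd u)))
     + (\<Sum>a\<in>matched_pair_points n P Q. ?J a (take (Suc a) (fst u), take (n - a) (snd u)) * ?E (drop (Suc a) (fst u), drop (n - a) (snd u))))"
    unfolding score_mgf_def
  proof (rule expect_mono[OF finite_set_string_pair_pmf])
    fix u assume "u \<in> set_pmf (string_pair_pmf P Q p)"
    then show "?E u \<le>
       (\<Sum>i\<in>cut_points n P Q. ?E (take i (fst u), take (n - i) (snd u)) * ?E (drop i (fst u), drop (n - i) (snd u)))
     + (\<Sum>a\<in>matched_pair_points n P Q. ?J a (take (Suc a) (fst u), take (n - a) (snd u)) * ?E (drop (Suc a) (fst u), drop (n - a) (snd u)))"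
      using exp_opt_score_le_decomposition[OF assms(1) _ _ assms(2), of "fst u" "snd u"]
      by (simp add: length_in_set_string_pair_pmf)
  qed
  also have "\<dots> = (\<Sum>i\<in>cut_points n P Q. expect (string_pair_pmf P Q p)
          (\<lambda>u. ?E (take i (fst u), take (n - i) (snd u)) * ?E (drop i (fst u), drop (n - i) (snd u))))
     + (\<Sum>a\<in>matched_pair_points n P Q. expect (string_pair_pmf P Q p)
          (\<lambda>u. ?J a (take (Suc a) (fst u), take (n - a) (snd u)) * ?E (drop (Suc a) (fst u), drop (n - a) (snd u))))"
    by (simp add: expect_add expect_sum finite_set_string_pair_pmf)
  also have "\<dots> = (\<Sum>i\<in>cut_points n P Q. score_mgf s i (n - i) * score_mgf s (P - i) (Q - (n - i)))
     + (\<Sum>a\<in>matched_pair_points n P Q. expect (string_pair_pmf (Suc a) (n - a) p) (?J a)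
                                * score_mgf s (P - Suc a) (Q - (n - a)))"
  proof (intro arg_cong2[where f = "(+)"] sum.cong refl)
    fix i assume "i \<in> cut_points n P Q"
    then show "expect (string_pair_pmf P Q p)
          (\<lambda>u. ?E (take i (fst u), take (n - i) (snd u)) * ?E (drop i (fst u), drop (n - i) (snd u)))
        = score_mgf s i (n - i) * score_mgf s (P - i) (Q - (n - i))"
      unfolding score_mgf_def by (intro expect_string_pair_pmf_split_mult) (auto simp: cut_points_def)
  next
    fix a assume "a \<in> matched_pair_points n P Q"
    then show "expect (string_pair_pmf P Q p)
          (\<lambda>u. ?J a (take (Suc a) (fst u), take (n - a) (snd u)) * ?E (drop (Suc a) (fst u), drop (n - a) (snd u)))
        = expect (string_pair_pmf (Suc a) (n - a) p) (?J a) * score_mgf s (P - Suc a) (Q - (n - a))"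
      unfolding score_mgf_def by (intro expect_string_pair_pmf_split_mult) (auto simp: matched_pair_points_def)
  qed
  finally show ?thesis .
qed

lemma score_mgf_recursion:
  assumes "n \<ge> 1" "s > 0" "n \<le> P + Q"
  shows "score_mgf s P Q \<le>
     (\<Sum>i\<in>cut_points n P Q. exp (real n * mgf_rate n s) * score_mgf s (P - i) (Q - (n - i)))
   + (\<Sum>a\<in>matched_pair_points n P Q. exp (real (n + 1) * mgf_rate n s) * score_mgf s (P - Suc a) (Q - (n - a)))"
proof -
  have block: "score_mgf s i (n - i) \<le> exp (real n * mgf_rate n s)" if "i \<in> cut_points n P Q" for i
    using that assms by (intro score_mgf_block_le) (auto simp: cut_points_def)
  have pair: "expect (string_pair_pmf (Suc a) (n - a) p) (\<lambda>u. exp (s * matched_pair_score a (n - 1 - a) u))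
      \<le> exp (real (n + 1) * mgf_rate n s)" if "a \<in> matched_pair_points n P Q" for a
    using that assms matched_pair_mgf_le[of n s a "n - 1 - a"] by (auto simp: matched_pair_points_def Suc_diff_Suc)
  from score_mgf_le_sum_products[OF assms(2,3)] show ?thesis
    by (rule order.trans) (intro add_mono sum_mono mult_right_mono block pair score_mgf_nonneg)
qed

lemma score_mgf_bound_step:
  assumes "n \<ge> 1" "s > 0" "n \<le> P + Q" "K \<ge> 0"
    and IH: "\<And>P' Q'. P' + Q' < P + Q \<Longrightarrow>
      score_mgf s P' Q' \<le> K * real (2 * n + 1) powr (real (P' + Q') / real n) * exp (real (P' + Q') * mgf_rate n s)"
  shows "score_mgf s P Q \<le> K * real (2 * n + 1) powr (real (P + Q) / real n) * exp (real (P + Q) * mgf_rate n s)"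
proof -
  define C where "C = real (2 * n + 1)"
  define \<alpha> where "\<alpha> = mgf_rate n s"
  define T where "T = P + Q"
  define Z where "Z = K * C powr ((real T - real n) / real n) * exp (real T * \<alpha>)"
  have "C \<ge> 1"
    by (simp add: C_def)
  have rest: "exp (real k * \<alpha>) * score_mgf s P' Q' \<le> Z" if "n \<le> k" "k \<le> T" "P' + Q' = T - k" for k P' Q'
  proof -
    have "exp (real k * \<alpha>) * score_mgf s P' Q'
        \<le> exp (real k * \<alpha>) * (K * C powr (real (T - k) / real n) * exp (real (T - k) * \<alpha>))"
      using IH[of P' Q'] that assms(1) by (intro mult_left_mono) (auto simp: C_def \<alpha>_def T_def)
    also have "\<dots> \<le> exp (real k * \<alpha>) * (K * C powr ((real T - real n) / real n) * exp (real (T - k) * \<alpha>))"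
      using that \<open>K \<ge> 0\<close> \<open>C \<ge> 1\<close> assms(1)
      by (intro mult_left_mono mult_right_mono powr_mono divide_right_mono) (auto simp: of_nat_diff)
    also have "\<dots> = Z"
      using that by (simp add: Z_def of_nat_diff mult_exp_exp algebra_simps)
    finally show ?thesis .
  qed
  have "score_mgf s P Q \<le>
       (\<Sum>i\<in>cut_points n P Q. exp (real n * \<alpha>) * score_mgf s (P - i) (Q - (n - i)))
     + (\<Sum>a\<in>matched_pair_points n P Q. exp (real (n + 1) * \<alpha>) * score_mgf s (P - Suc a) (Q - (n - a)))"
    unfolding \<alpha>_def using assms by (intro score_mgf_recursion) auto
  also have "\<dots> \<le> (\<Sum>i\<in>cut_points n P Q. Z) + (\<Sum>a\<in>matched_pair_points n P Q. Z)"
    by (intro add_mono sum_mono rest) (auto simp: cut_points_def matched_pair_points_def T_def)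
  also have "\<dots> = real (card (cut_points n P Q) + card (matched_pair_points n P Q)) * Z"
    by (simp add: distrib_right)
  also have "\<dots> \<le> C * Z"
    using card_cut_points_matched_pair_points[of n P Q] \<open>K \<ge> 0\<close>
    by (intro mult_right_mono) (simp_all add: C_def Z_def flip: of_nat_add)
  also have "\<dots> = K * C powr (real T / real n) * exp (real T * \<alpha>)"
    using \<open>C \<ge> 1\<close> assms(1) by (simp add: Z_def powr_mult_base diff_divide_distrib flip: powr_add)
  finally show ?thesis
    by (simp add: C_def \<alpha>_def T_def)
qed

text \<open>Unrolling the recursion \<open>(P + Q) / n\<close> times, each step contributes at most \<open>2 n + 1\<close>
  terms; \<open>K\<close> absorbs the strings of total length below \<open>n\<close>.\<close>
lemma score_mgf_bound:
  assumes "n \<ge> 1" "s > 0"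
  obtains K where "K > 0"
    "\<And>P Q. score_mgf s P Q \<le> K * real (2 * n + 1) powr (real (P + Q) / real n) * exp (real (P + Q) * mgf_rate n s)"
proof -
  define K where "K = Max ((\<lambda>(P, Q). score_mgf s P Q / exp (real (P + Q) * mgf_rate n s)) ` {(P, Q). P + Q < n})"
  have finite: "finite {(P, Q). P + Q < n}"
    by (rule finite_subset[of _ "{..<n} \<times> {..<n}"]) auto
  have small: "score_mgf s P Q \<le> K * exp (real (P + Q) * mgf_rate n s)" if "P + Q < n" for P Q
  proof -
    have "score_mgf s P Q / exp (real (P + Q) * mgf_rate n s) \<le> K"
      unfolding K_def using finite that by (intro Max_ge) auto
    then show ?thesis
      by (simp add: field_simps)
  qed
  have "K > 0"
    using small[of 0 0] assms(1) by (simp add: score_mgf_0)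
  have "score_mgf s P Q \<le> K * real (2 * n + 1) powr (real (P + Q) / real n) * exp (real (P + Q) * mgf_rate n s)" for P Q
  proof (induction "P + Q" arbitrary: P Q rule: less_induct)
    case less
    show ?case
    proof (cases "P + Q < n")
      case True
      then have "score_mgf s P Q \<le> K * 1 * exp (real (P + Q) * mgf_rate n s)"
        using small by simp
      also have "\<dots> \<le> K * real (2 * n + 1) powr (real (P + Q) / real n) * exp (real (P + Q) * mgf_rate n s)"
        using \<open>K > 0\<close> by (intro mult_right_mono mult_left_mono ge_one_powr_ge_zero) auto
      finally show ?thesis .
    next
      case False
      show ?thesis
      proof (rule score_mgf_bound_step)
        fix P' Q' assume "P' + Q' < P + Q"
        then show "score_mgf s P' Q' \<le> K * real (2 * n + 1) powr (real (P' + Q') / real n) * exp (real (P' + Q') * mgf_rate n s)"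
          by (rule less)
      qed (use False \<open>K > 0\<close> assms in auto)
    qed
  qed
  with \<open>K > 0\<close> show ?thesis
    using that by blast
qed

end

section \<open>The limit constant\<close>

context alignment_model
begin

lemma lambda_n_le_bound:
  assumes "n \<ge> 1" "s > 0"
  obtains K where "K > 0" "\<And>N. N \<ge> 1 \<Longrightarrow> lambda_n p S N \<le> lambda_n p S n + s * (delta_norm S)\<^sup>2 / 4
      + 2 * ln (real (2 * n + 1)) / (s * real n) + ln K / (s * real N)"
proof -
  define C where "C = real (2 * n + 1)"
  obtain K where "K > 0"
    and K: "\<And>P Q. score_mgf s P Q \<le> K * C powr (real (P + Q) / real n) * exp (real (P + Q) * mgf_rate n s)"
    using score_mgf_bound[OF assms] unfolding C_def by blast
  have "C \<ge> 1"
    by (simp add: C_def)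
  have "lambda_n p S N \<le> lambda_n p S n + s * (delta_norm S)\<^sup>2 / 4 + 2 * ln C / (s * real n) + ln K / (s * real N)"
    if "N \<ge> 1" for N
  proof -
    have "exp (s * mean_score N N) \<le> K * C powr (real (N + N) / real n) * exp (real (N + N) * mgf_rate n s)"
      using exp_mean_score_le_score_mgf K order.trans by blast
    then have "s * mean_score N N \<le> ln (K * C powr (real (N + N) / real n) * exp (real (N + N) * mgf_rate n s))"
      using \<open>K > 0\<close> \<open>C \<ge> 1\<close> by (subst ln_exp[symmetric], subst ln_le_cancel_iff) auto
    also have "\<dots> = ln K + (real (N + N) / real n) * ln C + real (N + N) * mgf_rate n s"
      using \<open>K > 0\<close> \<open>C \<ge> 1\<close> by (simp add: ln_mult ln_powr)
    finally have "s * mean_score N N / (s * real N)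
        \<le> (ln K + (real (N + N) / real n) * ln C + real (N + N) * mgf_rate n s) / (s * real N)"
      using assms that by (intro divide_right_mono) auto
    moreover have "s * mean_score N N / (s * real N) = lambda_n p S N"
      using assms by (simp add: lambda_n_eq)
    moreover have "(ln K + (real (N + N) / real n) * ln C + real (N + N) * mgf_rate n s) / (s * real N)
        = lambda_n p S n + s * (delta_norm S)\<^sup>2 / 4 + 2 * ln C / (s * real n) + ln K / (s * real N)"
      using assms that by (simp add: mgf_rate_def field_simps power2_eq_square)
    ultimately show ?thesis
      by simp
  qed
  then show ?thesis
    using that[OF \<open>K > 0\<close>] by (simp add: C_def)
qed

lemma bdd_above_lambda_n: "bdd_above ((\<lambda>N. lambda_n p S N) ` {1..})"
proof -
  obtain K where K: "\<And>N. N \<ge> 1 \<Longrightarrow> lambda_n p S N \<le> lambda_n p S 1 + (delta_norm S)\<^sup>2 / 4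
      + 2 * ln 3 + ln K / real N"
    using lambda_n_le_bound[of 1 1] by auto
  have "ln K / real N \<le> \<bar>ln K\<bar>" if "N \<ge> 1" for N
  proof -
    have "ln K / real N \<le> \<bar>ln K\<bar> / real N"
      using that by (intro divide_right_mono) auto
    also have "\<dots> \<le> \<bar>ln K\<bar> / 1"
      using that by (intro divide_left_mono) auto
    finally show ?thesis
      by simp
  qed
  then show ?thesis
    using K by (intro bdd_aboveI[of _ "lambda_n p S 1 + (delta_norm S)\<^sup>2 / 4 + 2 * ln 3 + \<bar>ln K\<bar>"])
      fastforce
qed

lemma lambda_n_tendsto: "(\<lambda>N. lambda_n p S N) \<longlonglongrightarrow> (SUP N\<in>{1..}. lambda_n p S N)"
  using superadditive_limit[of "\<lambda>N. mean_score N N"] mean_score_superadditive bdd_above_lambda_n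
  by (simp add: lambda_n_eq)

lemma lambda_lim_eq_Sup: "lambda_lim p S = (SUP N\<in>{1..}. lambda_n p S N)"
  unfolding lambda_lim_def using lambda_n_tendsto by (rule limI)

lemma lambda_n_le_lambda_lim: "n \<ge> 1 \<Longrightarrow> lambda_n p S n \<le> lambda_lim p S"
  unfolding lambda_lim_eq_Sup using bdd_above_lambda_n by (intro cSUP_upper) auto

lemma lambda_lim_le:
  assumes "n \<ge> 1"
  shows "lambda_lim p S \<le> lambda_n p S n + delta_norm S * sqrt (2 * ln (real (2 * n + 1)) / real n)"
proof (rule le_add_sqrt_of_forall_pos)
  fix s :: real assume "s > 0"
  define B where "B = lambda_n p S n + s * (delta_norm S)\<^sup>2 / 4 + 2 * ln (real (2 * n + 1)) / (s * real n)"
  obtain K where K: "\<And>N. N \<ge> 1 \<Longrightarrow> lambda_n p S N \<le> B + ln K / (s * real N)"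
    using lambda_n_le_bound[OF assms \<open>s > 0\<close>] unfolding B_def by blast
  have "(\<lambda>N. B + (ln K / s) / real N) \<longlonglongrightarrow> B + 0"
    by (intro tendsto_add tendsto_const lim_const_over_n)
  then have "(\<lambda>N. B + ln K / (s * real N)) \<longlonglongrightarrow> B"
    by simp
  then show "lambda_lim p S \<le> B"
    unfolding lambda_lim_eq_Sup using K by (intro LIMSEQ_le[OF lambda_n_tendsto]) blast+
qed (use assms in \<open>auto simp: delta_norm_nonneg\<close>)

end

theorem mainTheorem9:
  fixes p :: "'a::finite pmf"
    and S :: "'a option \<Rightarrow> 'a option \<Rightarrow> real"
    and n :: nat
  assumes sym: "\<And>c d. S c d = S d c"
    and n2: "n \<ge> 2"
  shows "lambda_n p S n \<le> lambda_lim p S \<and>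
         lambda_lim p S \<le> lambda_n p S n
           + sqrt ((2 * ln 3 + 2 * ln (real n + 2)) / ln (real n)) * delta_norm S
               * sqrt (ln (real n)) / sqrt (real n)
           + 2 * sup_norm S / real n"
proof -
  interpret alignment_model p S
    by unfold_locales (rule sym)
  have "lambda_lim p S \<le> lambda_n p S n + delta_norm S * sqrt (2 * ln (real (2 * n + 1)) / real n)"
    using n2 by (intro lambda_lim_le) simp
  also have "\<dots> \<le> lambda_n p S n + delta_norm S
      * (sqrt ((2 * ln 3 + 2 * ln (real n + 2)) / ln (real n)) * sqrt (ln (real n)) / sqrt (real n))"
    using sqrt_ln_odd_le[OF n2] delta_norm_nonneg by (intro add_left_mono mult_left_mono)
  also have "\<dots> \<le> lambda_n p S n
      + sqrt ((2 * ln 3 + 2 * ln (real n + 2)) / ln (real n)) * delta_norm S * sqrt (ln (real n)) / sqrt (real n)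
      + 2 * sup_norm S / real n"
    using sup_norm_nonneg[of S] by (simp add: mult_ac)
  finally show ?thesis
    using lambda_n_le_lambda_lim n2 by simp
qed

end
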